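(* Let $\mathbb{H}$ be a finite-dimensional complex Hilbert space with $\dim\mathbb{H}\ge2$, let $|X\rangle\in\mathbb{H}^{\otimes3}$ be a known unit vector, let $c_1,c_2>0$, and let $\alpha,\beta$ be nonzero complex numbers with $|\alpha|^2+|\beta|^2=1$, $|\mu\rangle=\alpha|0\rangle+\beta|1\rangle\in\mathbb{C}^2$. Then there exists a probabilistic quantum transformation $\mathcal{F}$ from $\mathbb{C}^2\otimes\mathbb{H}^{\otimes2}\otimes\mathbb{H}^{\otimes2}$ to $\mathbb{H}$, independent of $\alpha,\beta,\psi,\phi$, such that for all unit vectors $|\psi\rangle,|\phi\rangle\in\mathbb{H}$ satisfying $$|\langle X|(|\psi\rangle|\phi\rangle|\psi\rangle)|^2=c_1,\qquad |\langle X|(|\phi\rangle|\psi\rangle|\phi\rangle)|^2=c_2,$$ and all such $\alpha,\beta$, one has $\mathcal{F}(\rho_\mu\otimes\rho_\psi^{\otimes2}\otimes\rho_\phi^{\otimes2})=p\,\rho_\varphi$ where $$|\varphi\rangle\propto\alpha e^{i\theta_1}|\psi\rangle+\beta e^{i\theta_2}|\phi\rangle,\quad e^{i\theta_1}=\frac{\langle X|(|\phi\rangle|\psi\rangle|\phi\rangle)}{|\langle X|(|\phi\rangle|\psi\rangle|\phi\rangle)|},\quad e^{i\theta_2}=\frac{\langle X|(|\psi\rangle|\phi\rangle|\psi\rangle)}{|\langle X|(|\psi\rangle|\phi\rangle|\psi\rangle)|},$$ with success probability $p=\frac{c_1c_2}{c_1+c_2}\,\big\|\alpha e^{i\theta_1}|\psi\rangle+\beta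 e^{i\theta_2}|\phi\rangle\big\|^2$ (assumed nonzero).
   Context: For a unit vector $|\psi\rangle$, $\rho_\psi=|\psi\rangle\langle\psi|$; $|\varphi\rangle\propto|\chi\rangle$ means $|\varphi\rangle$ is the normalization of $|\chi\rangle$ up to a global phase. A probabilistic quantum transformation from $\mathbb{H}_1$ to $\mathbb{H}_2$ is a completely positive, trace-non-increasing linear map from operators on $\mathbb{H}_1$ to operators on $\mathbb{H}_2$. *)

theory Defs
  imports "Jordan_Normal_Form.Matrix" Complex_Main
begin

text \<open>Finite-dimensional complex Hilbert spaces are modelled as C^n with the standard
  inner product; vectors are complex vecs of dimension n, operators are complex
  n x n matrices.  Tensor products use the Kronecker convention: the basis vector
  e_i (x) e_j of C^m (x) C^n is e_(i*n+j) of C^(m*n).\<close>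

definition braket :: "complex vec \<Rightarrow> complex vec \<Rightarrow> complex" where
  "braket u v = (\<Sum>i<dim_vec u. cnj (u $ i) * v $ i)"

definition vnorm :: "complex vec \<Rightarrow> real" where
  "vnorm v = sqrt (\<Sum>i<dim_vec v. (cmod (v $ i))\<^sup>2)"

definition unit_vec_c :: "nat \<Rightarrow> complex vec \<Rightarrow> bool" where
  "unit_vec_c n v \<longleftrightarrow> v \<in> carrier_vec n \<and> vnorm v = 1"

definition tensor_vec :: "complex vec \<Rightarrow> complex vec \<Rightarrow> complex vec" where
  "tensor_vec u v = vec (dim_vec u * dim_vec v)
     (\<lambda>i. u $ (i div dim_vec v) * v $ (i mod dim_vec v))"

definition tensor_mat :: "complex mat \<Rightarrow> complex mat \<Rightarrow> complex mat" where
  "tensor_mat A B = mat (dim_row A * dim_row B) (dim_col A * dim_col B)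
     (\<lambda>(i, j). A $$ (i div dim_row B, j div dim_col B) * B $$ (i mod dim_row B, j mod dim_col B))"

definition proj :: "complex vec \<Rightarrow> complex mat" where
  "proj v = mat (dim_vec v) (dim_vec v) (\<lambda>(i, j). v $ i * cnj (v $ j))"

definition mtrace :: "complex mat \<Rightarrow> complex" where
  "mtrace A = (\<Sum>i<dim_row A. A $$ (i, i))"

definition psd :: "nat \<Rightarrow> complex mat \<Rightarrow> bool" where
  "psd n A \<longleftrightarrow> A \<in> carrier_mat n n \<and>
     (\<forall>v \<in> carrier_vec n. Im (braket v (A *\<^sub>v v)) = 0 \<and> Re (braket v (A *\<^sub>v v)) \<ge> 0)"

definition blk :: "nat \<Rightarrow> complex mat \<Rightarrow> nat \<Rightarrow> nat \<Rightarrow> complex mat" where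
  "blk n A a b = mat n n (\<lambda>(i, j). A $$ (a * n + i, b * n + j))"

text \<open>id_k (x) F, for a linear map F from operators on C^n to operators on C^m,
  acting on operators on C^k (x) C^n\<close>
definition ampl :: "nat \<Rightarrow> nat \<Rightarrow> nat \<Rightarrow> (complex mat \<Rightarrow> complex mat) \<Rightarrow> complex mat \<Rightarrow> complex mat" where
  "ampl k n m F A = mat (k * m) (k * m)
     (\<lambda>(I, J). F (blk n A (I div m) (J div m)) $$ (I mod m, J mod m))"

definition linear_map_op :: "nat \<Rightarrow> nat \<Rightarrow> (complex mat \<Rightarrow> complex mat) \<Rightarrow> bool" where
  "linear_map_op n m F \<longleftrightarrow>
     (\<forall>A \<in> carrier_mat n n. F A \<in> carrier_mat m m) \<and>
     (\<forall>A \<in> carrier_mat n n. \<forall>B \<in> carrier_mat n n. F (A + B) = F A + F B) \<and>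
     (\<forall>A \<in> carrier_mat n n. \<forall>c. F (c \<cdot>\<^sub>m A) = c \<cdot>\<^sub>m F A)"

definition completely_positive :: "nat \<Rightarrow> nat \<Rightarrow> (complex mat \<Rightarrow> complex mat) \<Rightarrow> bool" where
  "completely_positive n m F \<longleftrightarrow>
     (\<forall>k. \<forall>A. psd (k * n) A \<longrightarrow> psd (k * m) (ampl k n m F A))"

definition trace_nonincreasing :: "nat \<Rightarrow> (complex mat \<Rightarrow> complex mat) \<Rightarrow> bool" where
  "trace_nonincreasing n F \<longleftrightarrow> (\<forall>A. psd n A \<longrightarrow> Re (mtrace (F A)) \<le> Re (mtrace A))"

definition prob_qtrans :: "nat \<Rightarrow> nat \<Rightarrow> (complex mat \<Rightarrow> complex mat) \<Rightarrow> bool" where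
  "prob_qtrans n m F \<longleftrightarrow> linear_map_op n m F \<and> completely_positive n m F \<and> trace_nonincreasing n F"

end

theory Submission
  imports Defs
begin

(* The transformation has a single Kraus operator K, F(A) = K A K^*.  Reading the index of
   C^2 (x) H^4 as digits (s, x1, x2, x3, x4), K contracts the conjugate of X against the factors
   (x3, x1, x4) and keeps x2 when s = 0, and against (x1, x3, x2) keeping x4 when s = 1, weighting
   the branches by a = r / sqrt c2 and b = r / sqrt c1 with r^2 = c1 c2 / (c1 + c2).  Thus
     K (mu (x) psi (x) psi (x) phi (x) phi) = a alpha <X|phi psi phi> psi + b beta <X|psi phi psi> phi = r w
   with w the unnormalised target.  Each branch is an index permutation followed by contraction
   with the unit vector X, so K K^* = (a^2 + b^2) 1 = 1; a co-isometry gives a trace non-increasing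
   CP map, and the output is r^2 |w|^2 rho_(w/|w|) = p rho_phi'. *)

definition mat_adj :: "complex mat \<Rightarrow> complex mat" where
  "mat_adj M = mat (dim_col M) (dim_row M) (\<lambda>(i, j). cnj (M $$ (j, i)))"

lemma mat_adj_carrier [simp]: "M \<in> carrier_mat m n \<Longrightarrow> mat_adj M \<in> carrier_mat n m"
  by (auto simp: mat_adj_def)

lemma index_mat_adj [simp]:
  "i < dim_col M \<Longrightarrow> j < dim_row M \<Longrightarrow> mat_adj M $$ (i, j) = cnj (M $$ (j, i))"
  "dim_row (mat_adj M) = dim_col M" "dim_col (mat_adj M) = dim_row M"
  by (auto simp: mat_adj_def)

lemma index_mult_mat_sum:
  assumes "A \<in> carrier_mat m n" "B \<in> carrier_mat n l" "i < m" "j < l"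
  shows "(A * B) $$ (i, j) = (\<Sum>p<n. A $$ (i, p) * B $$ (p, j))"
  using assms by (auto simp: scalar_prod_def atLeast0LessThan intro!: sum.cong)

lemma index_mult_mat_adj_sum:
  assumes "M \<in> carrier_mat m n" "A \<in> carrier_mat n n" "i < m" "j < m"
  shows "(M * A * mat_adj M) $$ (i, j) = (\<Sum>p<n. \<Sum>q<n. M $$ (i, p) * A $$ (p, q) * cnj (M $$ (j, q)))"
proof -
  have "(M * A * mat_adj M) $$ (i, j) = (\<Sum>q<n. (M * A) $$ (i, q) * cnj (M $$ (j, q)))"
    using assms by (subst index_mult_mat_sum[of _ m n _ m]) auto
  also have "\<dots> = (\<Sum>q<n. \<Sum>p<n. M $$ (i, p) * A $$ (p, q) * cnj (M $$ (j, q)))"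
    using assms by (intro sum.cong refl, subst index_mult_mat_sum[OF assms(1,2)]) (auto simp: sum_distrib_right)
  also have "\<dots> = (\<Sum>p<n. \<Sum>q<n. M $$ (i, p) * A $$ (p, q) * cnj (M $$ (j, q)))"
    by (rule sum.swap)
  finally show ?thesis .
qed

lemma braket_mult_mat_vec:
  assumes "M \<in> carrier_mat m n" "v \<in> carrier_vec m" "u \<in> carrier_vec n"
  shows "braket v (M *\<^sub>v u) = braket (mat_adj M *\<^sub>v v) u"
proof -
  have "braket v (M *\<^sub>v u) = (\<Sum>i<m. \<Sum>j<n. cnj (v $ i) * (M $$ (i, j) * u $ j))"
    using assms by (auto simp: braket_def scalar_prod_def atLeast0LessThan sum_distrib_left intro!: sum.cong)
  also have "\<dots> = (\<Sum>j<n. \<Sum>i<m. cnj (v $ i) * (M $$ (i, j) * u $ j))"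
    by (rule sum.swap)
  also have "\<dots> = braket (mat_adj M *\<^sub>v v) u"
    using assms by (auto simp: braket_def scalar_prod_def atLeast0LessThan sum_distrib_right intro!: sum.cong)
  finally show ?thesis .
qed

lemma braket_self: "braket v v = complex_of_real ((vnorm v)\<^sup>2)"
proof -
  have "(vnorm v)\<^sup>2 = (\<Sum>i<dim_vec v. (cmod (v $ i))\<^sup>2)"
    unfolding vnorm_def by (simp add: sum_nonneg)
  then show ?thesis
    by (simp add: braket_def complex_norm_square mult.commute del: of_real_power)
qed

lemma psd_congruence:
  assumes "psd n A" "M \<in> carrier_mat m n"
  shows "psd m (M * A * mat_adj M)"
  unfolding psd_def
proof (intro conjI ballI)
  have A: "A \<in> carrier_mat n n" using assms(1) unfolding psd_def by auto
  then show "M * A * mat_adj M \<in> carrier_mat m m" using assms(2) by auto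
  fix v :: "complex vec" assume v: "v \<in> carrier_vec m"
  define u where "u = mat_adj M *\<^sub>v v"
  have u: "u \<in> carrier_vec n" using mult_mat_vec_carrier[OF mat_adj_carrier[OF assms(2)] v] by (simp add: u_def)
  have "(M * A * mat_adj M) *\<^sub>v v = M *\<^sub>v (A *\<^sub>v u)"
    using A assms(2) v u by (simp add: u_def assoc_mult_mat_vec[of _ m n _ m] assoc_mult_mat_vec[of _ m n _ n])
  then have "braket v ((M * A * mat_adj M) *\<^sub>v v) = braket u (A *\<^sub>v u)"
    using braket_mult_mat_vec[OF assms(2) v, of "A *\<^sub>v u"] A u by (simp add: u_def)
  then show "Im (braket v ((M * A * mat_adj M) *\<^sub>v v)) = 0"
    and "Re (braket v ((M * A * mat_adj M) *\<^sub>v v)) \<ge> 0"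
    using assms(1) u unfolding psd_def by auto
qed

lemma psd_trace_nonneg:
  assumes "psd n A"
  shows "Re (mtrace A) \<ge> 0"
proof -
  have A: "A \<in> carrier_mat n n" using assms unfolding psd_def by auto
  have "braket (unit_vec n i) (A *\<^sub>v unit_vec n i) = A $$ (i, i)" if i: "i < n" for i
  proof -
    have "braket (unit_vec n i) (A *\<^sub>v unit_vec n i) = (\<Sum>j<n. if j = i then (A *\<^sub>v unit_vec n i) $ j else 0)"
      unfolding braket_def using i by (intro sum.cong) auto
    also have "\<dots> = (A *\<^sub>v unit_vec n i) $ i" using i by simp
    also have "\<dots> = A $$ (i, i)" using i A by simp
    finally show ?thesis .
  qed
  then have "Re (A $$ (i, i)) \<ge> 0" if "i < n" for i
    using assms that unfolding psd_def by (metis unit_vec_carrier)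
  then have "(\<Sum>i<n. Re (A $$ (i, i))) \<ge> 0" by (intro sum_nonneg) auto
  then show ?thesis using A by (simp add: mtrace_def Re_sum)
qed

lemma mtrace_congruence:
  assumes "M \<in> carrier_mat m n" "A \<in> carrier_mat n n"
  shows "mtrace (M * A * mat_adj M) = (\<Sum>p<n. \<Sum>q<n. A $$ (p, q) * (mat_adj M * M) $$ (q, p))"
proof -
  have "mtrace (M * A * mat_adj M) = (\<Sum>i<m. (M * A * mat_adj M) $$ (i, i))"
    using assms by (simp add: mtrace_def)
  also have "\<dots> = (\<Sum>i<m. \<Sum>p<n. \<Sum>q<n. M $$ (i, p) * A $$ (p, q) * cnj (M $$ (i, q)))"
    by (intro sum.cong refl index_mult_mat_adj_sum[OF assms]) auto
  also have "\<dots> = (\<Sum>p<n. \<Sum>i<m. \<Sum>q<n. M $$ (i, p) * A $$ (p, q) * cnj (M $$ (i, q)))"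
    by (rule sum.swap)
  also have "\<dots> = (\<Sum>p<n. \<Sum>q<n. \<Sum>i<m. M $$ (i, p) * A $$ (p, q) * cnj (M $$ (i, q)))"
    by (rule sum.cong[OF refl], rule sum.swap)
  also have "\<dots> = (\<Sum>p<n. \<Sum>q<n. A $$ (p, q) * (mat_adj M * M) $$ (q, p))"
    using assms by (intro sum.cong refl, subst index_mult_mat_sum[of "mat_adj M" n m M n])
      (auto simp: sum_distrib_left mult_ac)
  finally show ?thesis .
qed

lemma sum_lessThan_mult:
  fixes f :: "nat \<Rightarrow> 'a :: comm_monoid_add"
  shows "(\<Sum>p<k * n. f p) = (\<Sum>a<k. \<Sum>b<n. f (a * n + b))"
proof (induction k)
  case (Suc k)
  have "{..<Suc k * n} = {..<k * n} \<union> {k * n..<n + k * n}" by auto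
  then have "(\<Sum>p<Suc k * n. f p) = (\<Sum>p<k * n. f p) + (\<Sum>p\<in>{0 + k * n..<n + k * n}. f p)"
    by (simp add: sum.union_disjoint ivl_disj_int)
  also have "(\<Sum>p\<in>{0 + k * n..<n + k * n}. f p) = (\<Sum>b<n. f (k * n + b))"
    by (subst sum.shift_bounds_nat_ivl) (simp add: atLeast0LessThan add.commute)
  finally show ?case using Suc by simp
qed simp

lemma sum_lessThan_mult_block:
  fixes g :: "nat \<Rightarrow> 'a :: comm_monoid_add"
  assumes "a < k"
  shows "(\<Sum>p<k * n. if p div n = a then g p else 0) = (\<Sum>b<n. g (a * n + b))"
proof -
  have "(\<Sum>p<k * n. if p div n = a then g p else 0)
      = (\<Sum>a'<k. \<Sum>b<n. if (a' * n + b) div n = a then g (a' * n + b) else 0)"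
    by (rule sum_lessThan_mult)
  also have "\<dots> = (\<Sum>a'<k. if a' = a then (\<Sum>b<n. g (a * n + b)) else 0)"
    by (rule sum.cong[OF refl]) (auto intro!: sum.cong)
  finally show ?thesis using assms by simp
qed

(* The k-fold amplification of A |-> K A K^* is the congruence by 1_k (x) K. *)
lemma completely_positive_congruence:
  assumes K: "K \<in> carrier_mat m n"
  shows "completely_positive n m (\<lambda>A. K * A * mat_adj K)"
  unfolding completely_positive_def
proof (intro allI impI)
  fix k A assume psd: "psd (k * n) A"
  have A: "A \<in> carrier_mat (k * n) (k * n)" using psd unfolding psd_def by auto
  define M where "M = tensor_mat (1\<^sub>m k) K"
  have M: "M \<in> carrier_mat (k * m) (k * n)" using K unfolding M_def by (auto simp: tensor_mat_def)
  have "ampl k n m (\<lambda>A. K * A * mat_adj K) A = M * A * mat_adj M"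
  proof (rule eq_matI)
    fix I J assume "I < dim_row (M * A * mat_adj M)" "J < dim_col (M * A * mat_adj M)"
    then have IJ: "I < k * m" "J < k * m" using M by auto
    then have "m > 0" by (cases m) auto
    then have im: "I mod m < m" "J mod m < m" by auto
    have a: "I div m < k" "J div m < k" using IJ by (auto simp: less_mult_imp_div_less)
    have blk: "blk n A (I div m) (J div m) \<in> carrier_mat n n" by (simp add: blk_def)
    have "ampl k n m (\<lambda>A. K * A * mat_adj K) A $$ (I, J)
       = (K * blk n A (I div m) (J div m) * mat_adj K) $$ (I mod m, J mod m)"
      using IJ by (simp add: ampl_def)
    also have "\<dots> = (\<Sum>p<n. \<Sum>q<n. K $$ (I mod m, p) * A $$ (I div m * n + p, J div m * n + q)
        * cnj (K $$ (J mod m, q)))"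
      by (subst index_mult_mat_adj_sum[OF K blk im]) (simp add: blk_def)
    also have "\<dots> = (\<Sum>p<k * n. if p div n = I div m then (\<Sum>q<k * n. if q div n = J div m then
         K $$ (I mod m, p mod n) * A $$ (p, q) * cnj (K $$ (J mod m, q mod n)) else 0) else 0)"
      using a by (simp add: sum_lessThan_mult_block)
    also have "\<dots> = (\<Sum>p<k * n. \<Sum>q<k * n. M $$ (I, p) * A $$ (p, q) * cnj (M $$ (J, q)))"
      using IJ K unfolding M_def
      by (intro sum.cong refl) (auto simp: tensor_mat_def less_mult_imp_div_less intro!: sum.cong)
    also have "\<dots> = (M * A * mat_adj M) $$ (I, J)"
      by (rule index_mult_mat_adj_sum[OF M A IJ, symmetric])
    finally show "ampl k n m (\<lambda>A. K * A * mat_adj K) A $$ (I, J) = (M * A * mat_adj M) $$ (I, J)" .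
  qed (use M in \<open>auto simp: ampl_def\<close>)
  then show "psd (k * m) (ampl k n m (\<lambda>A. K * A * mat_adj K) A)"
    using psd_congruence[OF psd M] by simp
qed

lemma linear_map_op_congruence:
  assumes K: "K \<in> carrier_mat m n"
  shows "linear_map_op n m (\<lambda>A. K * A * mat_adj K)"
  unfolding linear_map_op_def
proof (intro conjI ballI allI)
  fix A :: "complex mat" assume A: "A \<in> carrier_mat n n"
  show "K * A * mat_adj K \<in> carrier_mat m m" using K A by auto
  fix c show "K * (c \<cdot>\<^sub>m A) * mat_adj K = c \<cdot>\<^sub>m (K * A * mat_adj K)"
    using K A by (simp add: mult_smult_distrib mult_smult_assoc_mat[of _ m n _ m])
next
  fix A B :: "complex mat" assume A: "A \<in> carrier_mat n n" and B: "B \<in> carrier_mat n n"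
  show "K * (A + B) * mat_adj K = K * A * mat_adj K + K * B * mat_adj K"
    using K A B by (simp add: mult_add_distrib_mat add_mult_distrib_mat[of _ m n _ _ m])
qed

(* With the projection P = K^* K and L = 1 - P:
   tr[K A K^*] = tr[P A] and tr A - tr[P A] = tr[L A L] >= 0. *)
lemma trace_nonincreasing_coisometry:
  assumes K: "K \<in> carrier_mat m n" and coiso: "K * mat_adj K = 1\<^sub>m m"
  shows "trace_nonincreasing n (\<lambda>A. K * A * mat_adj K)"
  unfolding trace_nonincreasing_def
proof (intro allI impI)
  fix A assume psd: "psd n A"
  have A: "A \<in> carrier_mat n n" using psd unfolding psd_def by auto
  define P where "P = mat_adj K * K"
  define L where "L = 1\<^sub>m n - P"
  have Kh: "mat_adj K \<in> carrier_mat n m" using K by simp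
  have P: "P \<in> carrier_mat n n" using mult_carrier_mat[OF Kh K] by (simp add: P_def)
  have L: "L \<in> carrier_mat n n" using P by (simp add: L_def minus_carrier_mat)
  have PP: "P * P = P"
  proof -
    have "P * P = mat_adj K * (K * (mat_adj K * K))"
      unfolding P_def by (rule assoc_mult_mat[OF Kh K mult_carrier_mat[OF Kh K]])
    also have "K * (mat_adj K * K) = (K * mat_adj K) * K"
      by (rule assoc_mult_mat[OF K Kh K, symmetric])
    finally show ?thesis using coiso K by (simp add: P_def)
  qed
  have adj_L: "mat_adj L = L"
  proof (rule eq_matI)
    fix i j assume "i < dim_row L" "j < dim_col L"
    then have ij: "i < n" "j < n" using L by auto
    have "P $$ (j, i) = cnj (P $$ (i, j))"
      unfolding P_def using K ij Kh
      by (simp add: index_mult_mat_sum[OF Kh K] cnj_sum mult.commute del: index_mult_mat)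
    then show "mat_adj L $$ (i, j) = L $$ (i, j)" using ij L P by (auto simp: L_def)
  qed (use L in auto)
  have LL: "mat_adj L * L = L"
  proof -
    have "L * L = 1\<^sub>m n * L - P * L"
      unfolding L_def by (rule minus_mult_distrib_mat[OF one_carrier_mat P L[unfolded L_def]])
    also have "P * L = P * 1\<^sub>m n - P * P"
      unfolding L_def by (rule mult_minus_distrib_mat[OF P one_carrier_mat P])
    finally have "L * L = 1\<^sub>m n - P - 0\<^sub>m n n" using P L PP by (simp add: L_def)
    also have "\<dots> = L" unfolding L_def by (rule eq_matI) (use P in auto)
    finally show ?thesis using adj_L by simp
  qed
  have "0 \<le> Re (mtrace (L * A * mat_adj L))" by (rule psd_trace_nonneg[OF psd_congruence[OF psd L]])
  also have "mtrace (L * A * mat_adj L) = (\<Sum>p<n. \<Sum>q<n. A $$ (p, q) * L $$ (q, p))"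
    using mtrace_congruence[OF L A] LL by simp
  also have "\<dots> = (\<Sum>p<n. \<Sum>q<n. (if q = p then A $$ (p, q) else 0) - A $$ (p, q) * P $$ (q, p))"
    using P by (intro sum.cong refl) (auto simp: L_def algebra_simps)
  also have "\<dots> = mtrace A - mtrace (K * A * mat_adj K)"
    using mtrace_congruence[OF K A] A by (simp add: sum_subtractf mtrace_def P_def)
  finally show "Re (mtrace (K * A * mat_adj K)) \<le> Re (mtrace A)" by simp
qed

lemma prob_qtrans_coisometry:
  assumes "K \<in> carrier_mat m n" "K * mat_adj K = 1\<^sub>m m"
  shows "prob_qtrans n m (\<lambda>A. K * A * mat_adj K)"
  using assms completely_positive_congruence linear_map_op_congruence trace_nonincreasing_coisometry
  by (simp add: prob_qtrans_def)

lemma proj_tensor_vec: "tensor_mat (proj u) (proj v) = proj (tensor_vec u v)"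
proof (rule eq_matI)
  fix i j assume "i < dim_row (proj (tensor_vec u v))" "j < dim_col (proj (tensor_vec u v))"
  then have ij: "i < dim_vec u * dim_vec v" "j < dim_vec u * dim_vec v"
    by (auto simp: proj_def tensor_vec_def)
  then have "dim_vec v > 0" by (cases "dim_vec v") auto
  with ij show "tensor_mat (proj u) (proj v) $$ (i, j) = proj (tensor_vec u v) $$ (i, j)"
    by (simp add: tensor_mat_def proj_def tensor_vec_def less_mult_imp_div_less)
qed (auto simp: tensor_mat_def proj_def tensor_vec_def)

lemma proj_mult_mat_vec:
  assumes K: "K \<in> carrier_mat m n" and v: "dim_vec v = n"
  shows "K * proj v * mat_adj K = proj (K *\<^sub>v v)"
proof (rule eq_matI)
  have P: "proj v \<in> carrier_mat n n" using v by (simp add: proj_def)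
  fix i j assume "i < dim_row (proj (K *\<^sub>v v))" "j < dim_col (proj (K *\<^sub>v v))"
  then have ij: "i < m" "j < m" using K by (auto simp: proj_def)
  have "(K * proj v * mat_adj K) $$ (i, j)
      = (\<Sum>p<n. \<Sum>q<n. K $$ (i, p) * proj v $$ (p, q) * cnj (K $$ (j, q)))"
    by (rule index_mult_mat_adj_sum[OF K P ij])
  also have "\<dots> = (\<Sum>p<n. K $$ (i, p) * v $ p) * cnj (\<Sum>q<n. K $$ (j, q) * v $ q)"
    using v by (simp add: proj_def sum_distrib_left sum_distrib_right mult_ac cnj_sum) (rule sum.swap)
  also have "\<dots> = proj (K *\<^sub>v v) $$ (i, j)"
    using ij K v by (simp add: proj_def scalar_prod_def atLeast0LessThan)
  finally show "(K * proj v * mat_adj K) $$ (i, j) = proj (K *\<^sub>v v) $$ (i, j)" .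
qed (use K in \<open>auto simp: proj_def\<close>)

lemma proj_smult: "proj (c \<cdot>\<^sub>v v) = (c * cnj c) \<cdot>\<^sub>m proj v"
  by (rule eq_matI) (auto simp: proj_def)

(* Column i is c s * conj (Y $ j) * e_z where dec i = (s, j, z): once the tensor factors are
   reordered along dec, this is the operator sum_s c s <s| (x) <Y| (x) 1. *)
definition contraction_op ::
  "nat \<Rightarrow> nat \<Rightarrow> (nat \<Rightarrow> nat \<times> nat \<times> nat) \<Rightarrow> (nat \<Rightarrow> complex) \<Rightarrow> complex vec \<Rightarrow> complex mat" where
  "contraction_op m N dec c Y = mat m N
     (\<lambda>(y, i). case dec i of (s, j, z) \<Rightarrow> if z = y then c s * cnj (Y $ j) else 0)"

lemma contraction_op_carrier: "contraction_op m N dec c Y \<in> carrier_mat m N"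
  and dim_contraction_op [simp]:
    "dim_row (contraction_op m N dec c Y) = m" "dim_col (contraction_op m N dec c Y) = N"
  by (simp_all add: contraction_op_def)

lemma sum_bij_betw_triple:
  assumes "bij_betw dec {..<N} ({..<k} \<times> {..<n} \<times> {..<m})"
  shows "(\<Sum>i<N. f (dec i)) = (\<Sum>s<k. \<Sum>j<n. \<Sum>z<m. f (s, j, z))"
  using sum.reindex_bij_betw[OF assms, of f] by (simp add: sum.cartesian_product)

lemma sum_lessThan_delta_mult:
  fixes f :: "nat \<Rightarrow> 'a :: semiring_0"
  shows "(\<Sum>z<m. (if z = y then a else 0) * f z) = (if y < m then a * f y else 0)"
  by (subst sum.cong[OF refl, of _ _ "\<lambda>z. if z = y then a * f y else 0"]) auto

lemma contraction_op_coisometry: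
  assumes dec: "bij_betw dec {..<N} ({..<k} \<times> {..<dim_vec Y} \<times> {..<m})"
  shows "contraction_op m N dec c Y * mat_adj (contraction_op m N dec c Y)
    = ((\<Sum>s<k. c s * cnj (c s)) * braket Y Y) \<cdot>\<^sub>m 1\<^sub>m m"
proof (rule eq_matI)
  let ?K = "contraction_op m N dec c Y"
  fix y y' assume "y < dim_row (((\<Sum>s<k. c s * cnj (c s)) * braket Y Y) \<cdot>\<^sub>m 1\<^sub>m m)"
    "y' < dim_col (((\<Sum>s<k. c s * cnj (c s)) * braket Y Y) \<cdot>\<^sub>m 1\<^sub>m m)"
  then have y: "y < m" "y' < m" by auto
  have "(?K * mat_adj ?K) $$ (y, y') = (\<Sum>i<N. ?K $$ (y, i) * cnj (?K $$ (y', i)))"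
    using y by (subst index_mult_mat_sum[of _ m N _ m]) (auto simp: contraction_op_carrier)
  also have "\<dots> = (\<Sum>i<N. (\<lambda>(s, j, z). (if z = y then c s * cnj (Y $ j) else 0)
      * cnj (if z = y' then c s * cnj (Y $ j) else 0)) (dec i))"
    using y by (intro sum.cong refl) (simp add: contraction_op_def split_def)
  also have "\<dots> = (\<Sum>s<k. \<Sum>j<dim_vec Y. \<Sum>z<m.
      (if z = y then c s * cnj (Y $ j) else 0) * cnj (if z = y' then c s * cnj (Y $ j) else 0))"
    by (subst sum_bij_betw_triple[OF dec]) simp
  also have "\<dots> = (\<Sum>s<k. \<Sum>j<dim_vec Y. if y = y' then c s * cnj (c s) * (cnj (Y $ j) * Y $ j) else 0)"
    using y by (simp only: sum_lessThan_delta_mult) (auto intro!: sum.cong)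
  also have "\<dots> = (if y = y' then (\<Sum>s<k. c s * cnj (c s)) * braket Y Y else 0)"
    by (simp add: braket_def sum_product mult_ac)
  finally show "(?K * mat_adj ?K) $$ (y, y') = (((\<Sum>s<k. c s * cnj (c s)) * braket Y Y) \<cdot>\<^sub>m 1\<^sub>m m) $$ (y, y')"
    using y by simp
qed (auto simp: contraction_op_def)

lemma contraction_op_mult_vec:
  assumes dec: "bij_betw dec {..<N} ({..<k} \<times> {..<dim_vec Y} \<times> {..<m})"
    and v: "v \<in> carrier_vec N"
    and t: "\<And>s. s < k \<Longrightarrow> dim_vec (t s) = dim_vec Y"
    and v_dec: "\<And>i. i < N \<Longrightarrow> v $ i = (case dec i of (s, j, z) \<Rightarrow> g s * t s $ j * u s $ z)"
  shows "contraction_op m N dec c Y *\<^sub>v v = vec m (\<lambda>y. \<Sum>s<k. c s * g s * braket Y (t s) * u s $ y)"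
proof (rule eq_vecI)
  fix y assume "y < dim_vec (vec m (\<lambda>y. \<Sum>s<k. c s * g s * braket Y (t s) * u s $ y))"
  then have y: "y < m" by simp
  have "(contraction_op m N dec c Y *\<^sub>v v) $ y
      = (\<Sum>i<N. (case dec i of (s, j, z) \<Rightarrow> if z = y then c s * cnj (Y $ j) else 0) * v $ i)"
    using y v by (simp add: contraction_op_def scalar_prod_def atLeast0LessThan)
  also have "\<dots> = (\<Sum>i<N. (\<lambda>(s, j, z). (if z = y then c s * cnj (Y $ j) else 0)
      * (g s * t s $ j * u s $ z)) (dec i))"
    using v_dec by (intro sum.cong refl) (simp add: split_def)
  also have "\<dots> = (\<Sum>s<k. \<Sum>j<dim_vec Y. \<Sum>z<m.
      (if z = y then c s * cnj (Y $ j) else 0) * (g s * t s $ j * u s $ z))"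
    by (subst sum_bij_betw_triple[OF dec]) simp
  also have "\<dots> = (\<Sum>s<k. c s * g s * braket Y (t s) * u s $ y)"
    using y t by (simp only: sum_lessThan_delta_mult)
      (simp add: braket_def sum_distrib_left sum_distrib_right mult_ac)
  finally show "(contraction_op m N dec c Y *\<^sub>v v) $ y = vec m (\<lambda>y. \<Sum>s<k. c s * g s * braket Y (t s) * u s $ y) $ y"
    using y by simp
qed (simp add: contraction_op_def)

definition contraction_index :: "nat \<Rightarrow> nat \<Rightarrow> nat \<times> nat \<times> nat" where
  "contraction_index d i =
     (let x1 = i div d div d div d mod d; x2 = i div d div d mod d;
          x3 = i div d mod d; x4 = i mod d
      in if i div d div d div d div d = 0 then (0, (x3 * d + x1) * d + x4, x2)
         else (1, (x1 * d + x3) * d + x2, x4))"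

lemma mult_add_less_mult:
  fixes a b d x :: nat
  assumes "a < b" "x < d"
  shows "a * d + x < b * d"
proof -
  have "a * d + x < Suc a * d" using assms(2) by simp
  also have "\<dots> \<le> b * d" using assms(1) by (intro mult_le_mono1) simp
  finally show ?thesis .
qed

lemma digits_less_cube:
  fixes a b c d :: nat
  assumes "a < d" "b < d" "c < d"
  shows "(a * d + b) * d + c < d ^ 3"
  using mult_add_less_mult[OF mult_add_less_mult[OF assms(1,2)] assms(3)]
  by (simp add: power3_eq_cube)

lemma top_digit_less_two:
  fixes i d :: nat
  assumes "i < 2 * d\<^sup>2 * d\<^sup>2"
  shows "i div d div d div d div d < 2"
proof -
  have "i < 2 * (d * (d * (d * d)))" using assms by (simp add: power2_eq_square mult.assoc)
  then have "i div (d * (d * (d * d))) < 2" by (rule less_mult_imp_div_less)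
  then show ?thesis by (simp add: div_mult2_eq)
qed

lemma top_digit_less_cube:
  fixes j d :: nat
  assumes "j < d ^ 3"
  shows "j div d div d < d"
  using assms by (simp add: power3_eq_cube less_mult_imp_div_less div_mult2_eq[symmetric])

lemma bij_betw_contraction_index:
  "bij_betw (contraction_index d) {..<2 * d\<^sup>2 * d\<^sup>2} ({..<2} \<times> {..<d ^ 3} \<times> {..<d})"
proof (cases "d = 0")
  case False
  then have d: "d > 0" by simp
  define enc where "enc = (\<lambda>(s :: nat, j, y). if s = 0
      then ((j div d mod d * d + y) * d + j div d div d) * d + j mod d
      else (((d + j div d div d) * d + j mod d) * d + j div d mod d) * d + y)"
  have N: "2 * d\<^sup>2 * d\<^sup>2 = 2 * d * d * d * d" by (simp add: power2_eq_square)
  show ?thesis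
  proof (rule bij_betw_byWitness[where f' = enc])
    show "\<forall>i\<in>{..<2 * d\<^sup>2 * d\<^sup>2}. enc (contraction_index d i) = i"
    proof
      fix i assume "i \<in> {..<2 * d\<^sup>2 * d\<^sup>2}"
      define q where "q = i div d div d div d"
      have s: "q div d < 2" using top_digit_less_two \<open>i \<in> _\<close> by (simp add: q_def)
      have "(if q div d = 0 then q mod d else d + q mod d) = q"
        using s div_mult_mod_eq[of q d] by (cases "q div d") auto
      moreover have "q div d = 0 \<Longrightarrow> q < d" using d by (simp add: div_eq_0_iff)
      ultimately show "enc (contraction_index d i) = i"
        unfolding q_def using d by (auto simp: enc_def contraction_index_def Let_def split: if_splits)
    qed
    show "\<forall>x\<in>{..<2} \<times> {..<d ^ 3} \<times> {..<d}. contraction_index d (enc x) = x"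
    proof (clarify)
      fix s j y assume "s < (2::nat)" "j < d ^ 3" "y < d"
      moreover note top_digit_less_cube[OF \<open>j < d ^ 3\<close>]
      ultimately show "contraction_index d (enc (s, j, y)) = (s, j, y)"
        using d by (auto simp: enc_def contraction_index_def Let_def)
    qed
    show "contraction_index d ` {..<2 * d\<^sup>2 * d\<^sup>2} \<subseteq> {..<2} \<times> {..<d ^ 3} \<times> {..<d}"
      using d by (auto simp: contraction_index_def Let_def intro!: digits_less_cube)
    show "enc ` ({..<2} \<times> {..<d ^ 3} \<times> {..<d}) \<subseteq> {..<2 * d\<^sup>2 * d\<^sup>2}"
    proof clarify
      fix s j y assume "s < (2::nat)" "j < d ^ 3" "y < d"
      moreover note top_digit_less_cube[OF \<open>j < d ^ 3\<close>]
      moreover have "j div d mod d < 2 * d" using mod_less_divisor[OF d, of "j div d"] by linarith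
      ultimately have "enc (s, j, y) < 2 * d * d * d * d"
        using d unfolding enc_def by (auto intro!: mult_add_less_mult)
      then show "enc (s, j, y) < 2 * d\<^sup>2 * d\<^sup>2" by (simp add: N)
    qed
  qed
qed (simp add: bij_betw_def)

lemma index_tensor_vec:
  "i < dim_vec u * dim_vec v \<Longrightarrow> tensor_vec u v $ i = u $ (i div dim_vec v) * v $ (i mod dim_vec v)"
  and dim_tensor_vec [simp]: "dim_vec (tensor_vec u v) = dim_vec u * dim_vec v"
  by (auto simp: tensor_vec_def)

lemma index_tensor_vec3:
  assumes "dim_vec u = d" "dim_vec v = d" "dim_vec w = d" "a < d" "b < d" "c < d"
  shows "tensor_vec (tensor_vec u v) w $ ((a * d + b) * d + c) = u $ a * v $ b * w $ c"
proof -
  have "(a * d + b) * d + c < d * d * d"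
    using digits_less_cube[OF assms(4-6)] by (simp add: power3_eq_cube)
  moreover have "a * d + b < d * d" using mult_add_less_mult[OF assms(4,5)] .
  ultimately show ?thesis using assms by (simp add: index_tensor_vec)
qed

lemma index_tensor_vec5:
  assumes "dim_vec \<mu> = 2" "dim_vec \<psi> = d" "dim_vec \<phi> = d" "i < 2 * d\<^sup>2 * d\<^sup>2"
  shows "tensor_vec (tensor_vec (tensor_vec (tensor_vec \<mu> \<psi>) \<psi>) \<phi>) \<phi> $ i
    = \<mu> $ (i div d div d div d div d) * \<psi> $ (i div d div d div d mod d) * \<psi> $ (i div d div d mod d)
      * \<phi> $ (i div d mod d) * \<phi> $ (i mod d)"
proof -
  have "i < 2 * d * d * d * d" using assms(4) by (simp add: power2_eq_square mult.assoc)
  then show ?thesis using assms by (simp add: index_tensor_vec less_mult_imp_div_less)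
qed

lemma index_tensor_vec_contraction_index:
  assumes "dim_vec \<mu> = 2" "dim_vec \<psi> = d" "dim_vec \<phi> = d" "i < 2 * d\<^sup>2 * d\<^sup>2"
  shows "tensor_vec (tensor_vec (tensor_vec (tensor_vec \<mu> \<psi>) \<psi>) \<phi>) \<phi> $ i =
    (case contraction_index d i of (s, j, y) \<Rightarrow>
       \<mu> $ s * (if s = 0 then tensor_vec (tensor_vec \<phi> \<psi>) \<phi> else tensor_vec (tensor_vec \<psi> \<phi>) \<psi>) $ j
         * (if s = 0 then \<psi> else \<phi>) $ y)"
proof -
  have d: "d > 0" using assms(4) by (cases d) auto
  have s: "i div d div d div d div d \<noteq> 0 \<Longrightarrow> i div d div d div d div d = 1"
    using top_digit_less_two[OF assms(4)] by linarith
  show ?thesis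
    unfolding index_tensor_vec5[OF assms]
    using assms(1-3) s d by (simp add: contraction_index_def Let_def index_tensor_vec3)
qed

lemma contraction_op_output:
  fixes c :: "nat \<Rightarrow> complex" and \<alpha> \<beta> :: complex
  assumes X: "dim_vec X = d ^ 3" and \<psi>: "dim_vec \<psi> = d" and \<phi>: "dim_vec \<phi> = d"
  defines "\<mu> \<equiv> vec 2 (\<lambda>i. if i = 0 then \<alpha> else \<beta>)"
  shows "contraction_op d (2 * d\<^sup>2 * d\<^sup>2) (contraction_index d) c X
      *\<^sub>v tensor_vec (tensor_vec (tensor_vec (tensor_vec \<mu> \<psi>) \<psi>) \<phi>) \<phi>
    = (c 0 * \<alpha> * braket X (tensor_vec (tensor_vec \<phi> \<psi>) \<phi>)) \<cdot>\<^sub>v \<psi>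
      + (c 1 * \<beta> * braket X (tensor_vec (tensor_vec \<psi> \<phi>) \<psi>)) \<cdot>\<^sub>v \<phi>"
proof -
  define t where "t s = (if s = 0 then tensor_vec (tensor_vec \<phi> \<psi>) \<phi> else tensor_vec (tensor_vec \<psi> \<phi>) \<psi>)"
    for s :: nat
  define u where "u s = (if s = 0 then \<psi> else \<phi>)" for s :: nat
  have \<mu>: "dim_vec \<mu> = 2" by (simp add: \<mu>_def)
  have bij: "bij_betw (contraction_index d) {..<2 * d\<^sup>2 * d\<^sup>2} ({..<2} \<times> {..<dim_vec X} \<times> {..<d})"
    using bij_betw_contraction_index X by simp
  have v: "tensor_vec (tensor_vec (tensor_vec (tensor_vec \<mu> \<psi>) \<psi>) \<phi>) \<phi> \<in> carrier_vec (2 * d\<^sup>2 * d\<^sup>2)"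
    using \<psi> \<phi> \<mu> by (intro carrier_vecI) (simp add: power2_eq_square)
  have t: "dim_vec (t s) = dim_vec X" for s
    using X \<psi> \<phi> by (simp add: t_def power3_eq_cube)
  have v_dec: "tensor_vec (tensor_vec (tensor_vec (tensor_vec \<mu> \<psi>) \<psi>) \<phi>) \<phi> $ i
      = (case contraction_index d i of (s, j, y) \<Rightarrow> \<mu> $ s * t s $ j * u s $ y)" if "i < 2 * d\<^sup>2 * d\<^sup>2" for i
    unfolding t_def u_def by (rule index_tensor_vec_contraction_index[OF \<mu> \<psi> \<phi> that])
  note contraction_op_mult_vec[OF bij v t v_dec, of c]
  also have "vec d (\<lambda>y. \<Sum>s<2. c s * \<mu> $ s * braket X (t s) * u s $ y)
    = (c 0 * \<alpha> * braket X (tensor_vec (tensor_vec \<phi> \<psi>) \<phi>)) \<cdot>\<^sub>v \<psi>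
      + (c 1 * \<beta> * braket X (tensor_vec (tensor_vec \<psi> \<phi>) \<psi>)) \<cdot>\<^sub>v \<phi>"
  proof (rule eq_vecI)
    fix y assume "y < dim_vec ((c 0 * \<alpha> * braket X (tensor_vec (tensor_vec \<phi> \<psi>) \<phi>)) \<cdot>\<^sub>v \<psi>
      + (c 1 * \<beta> * braket X (tensor_vec (tensor_vec \<psi> \<phi>) \<psi>)) \<cdot>\<^sub>v \<phi>)"
    then have "y < d" using \<phi> by simp
    moreover have "(\<Sum>s<2. f s) = f 0 + f (1 :: nat)" for f :: "nat \<Rightarrow> complex"
      by (simp add: numeral_2_eq_2)
    ultimately show "vec d (\<lambda>y. \<Sum>s<2. c s * \<mu> $ s * braket X (t s) * u s $ y) $ y
      = ((c 0 * \<alpha> * braket X (tensor_vec (tensor_vec \<phi> \<psi>) \<phi>)) \<cdot>\<^sub>v \<psi>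
      + (c 1 * \<beta> * braket X (tensor_vec (tensor_vec \<psi> \<phi>) \<psi>)) \<cdot>\<^sub>v \<phi>) $ y"
      using \<psi> \<phi> by (simp add: \<mu>_def t_def u_def)
  qed (use \<psi> \<phi> in simp)
  finally show ?thesis .
qed

lemma proj_mult_mat_vec_normalize:
  assumes K: "K \<in> carrier_mat m n" and v: "dim_vec v = n"
    and Kv: "K *\<^sub>v v = complex_of_real r \<cdot>\<^sub>v w" and w: "vnorm w \<noteq> 0"
  shows "K * proj v * mat_adj K
    = complex_of_real (r\<^sup>2 * (vnorm w)\<^sup>2) \<cdot>\<^sub>m proj (complex_of_real (1 / vnorm w) \<cdot>\<^sub>v w)"
proof -
  have "K * proj v * mat_adj K = complex_of_real (r\<^sup>2) \<cdot>\<^sub>m proj w"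
    using proj_mult_mat_vec[OF K v] by (simp add: Kv proj_smult power2_eq_square)
  also have "\<dots> = complex_of_real (r\<^sup>2 * (vnorm w)\<^sup>2) \<cdot>\<^sub>m proj (complex_of_real (1 / vnorm w) \<cdot>\<^sub>v w)"
    using w by (intro eq_matI) (auto simp: proj_def power2_eq_square field_simps)
  finally show ?thesis .
qed

lemma sqrt_weights_sum:
  fixes c1 c2 r :: real
  assumes "c1 > 0" "c2 > 0" "r\<^sup>2 = c1 * c2 / (c1 + c2)"
  shows "(r / sqrt c2)\<^sup>2 + (r / sqrt c1)\<^sup>2 = 1"
proof -
  have "(r / sqrt c2)\<^sup>2 = c1 / (c1 + c2)" "(r / sqrt c1)\<^sup>2 = c2 / (c1 + c2)"
    using assms by (simp_all add: power_divide)
  then show ?thesis using assms by (simp add: add_divide_distrib[symmetric])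
qed

definition superposition_kraus :: "nat \<Rightarrow> complex vec \<Rightarrow> real \<Rightarrow> real \<Rightarrow> complex mat" where
  "superposition_kraus d X c1 c2 = contraction_op d (2 * d\<^sup>2 * d\<^sup>2) (contraction_index d)
     (\<lambda>s. complex_of_real (sqrt (c1 * c2 / (c1 + c2)) / sqrt (if s = 0 then c2 else c1))) X"

lemma superposition_kraus_coisometry:
  assumes "unit_vec_c (d ^ 3) X" "c1 > 0" "c2 > 0"
  shows "superposition_kraus d X c1 c2 * mat_adj (superposition_kraus d X c1 c2) = 1\<^sub>m d"
proof -
  define r where "r = sqrt (c1 * c2 / (c1 + c2))"
  have "r\<^sup>2 = c1 * c2 / (c1 + c2)" using assms(2,3) by (simp add: r_def)
  then have weights: "(r / sqrt c2)\<^sup>2 + (r / sqrt c1)\<^sup>2 = 1" by (rule sqrt_weights_sum[OF assms(2,3)])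
  have X: "dim_vec X = d ^ 3" "braket X X = 1" using assms(1) by (simp_all add: unit_vec_c_def braket_self)
  have "(1 :: complex) \<cdot>\<^sub>m 1\<^sub>m d = 1\<^sub>m d" by (rule eq_matI) auto
  then show ?thesis
    using contraction_op_coisometry[of "contraction_index d" _ 2 X d] bij_betw_contraction_index[of d] weights X
    unfolding superposition_kraus_def r_def[symmetric]
    by (simp add: numeral_2_eq_2 power2_eq_square flip: of_real_mult of_real_add of_real_divide)
qed

lemma superposition_kraus_output:
  assumes "dim_vec X = d ^ 3" "dim_vec \<psi> = d" "dim_vec \<phi> = d" "c1 > 0" "c2 > 0"
    and "(cmod (braket X (tensor_vec (tensor_vec \<psi> \<phi>) \<psi>)))\<^sup>2 = c1"
    and "(cmod (braket X (tensor_vec (tensor_vec \<phi> \<psi>) \<phi>)))\<^sup>2 = c2"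
  defines "B1 \<equiv> braket X (tensor_vec (tensor_vec \<psi> \<phi>) \<psi>)"
    and "B2 \<equiv> braket X (tensor_vec (tensor_vec \<phi> \<psi>) \<phi>)"
  shows "superposition_kraus d X c1 c2 *\<^sub>v tensor_vec (tensor_vec (tensor_vec (tensor_vec
      (vec 2 (\<lambda>i. if i = 0 then \<alpha> else \<beta>)) \<psi>) \<psi>) \<phi>) \<phi>
    = complex_of_real (sqrt (c1 * c2 / (c1 + c2)))
      \<cdot>\<^sub>v ((\<alpha> * (B2 / complex_of_real (cmod B2))) \<cdot>\<^sub>v \<psi> + (\<beta> * (B1 / complex_of_real (cmod B1))) \<cdot>\<^sub>v \<phi>)"
proof -
  have "cmod B1 = sqrt c1" "cmod B2 = sqrt c2"
    using assms(6,7) by (auto simp: B1_def B2_def intro!: real_sqrt_unique[THEN sym])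
  then show ?thesis
    unfolding superposition_kraus_def contraction_op_output[OF assms(1-3)] B1_def[symmetric] B2_def[symmetric]
    using assms(2-5) by (intro eq_vecI) (auto simp: field_simps)
qed

theorem theorem8:
  fixes d :: nat and X :: "complex vec" and c1 c2 :: real
  assumes "d \<ge> 2"
    and "unit_vec_c (d ^ 3) X"
    and "c1 > 0" and "c2 > 0"
  shows "\<exists>F. prob_qtrans (2 * d ^ 2 * d ^ 2) d F \<and>
    (\<forall>\<psi> \<phi> (\<alpha>::complex) (\<beta>::complex).
       unit_vec_c d \<psi> \<longrightarrow> unit_vec_c d \<phi> \<longrightarrow>
       (cmod (braket X (tensor_vec (tensor_vec \<psi> \<phi>) \<psi>)))\<^sup>2 = c1 \<longrightarrow>
       (cmod (braket X (tensor_vec (tensor_vec \<phi> \<psi>) \<phi>)))\<^sup>2 = c2 \<longrightarrow>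
       \<alpha> \<noteq> 0 \<longrightarrow> \<beta> \<noteq> 0 \<longrightarrow> (cmod \<alpha>)\<^sup>2 + (cmod \<beta>)\<^sup>2 = 1 \<longrightarrow>
       (let \<mu> = vec 2 (\<lambda>i. if i = 0 then \<alpha> else \<beta>);
            e1 = braket X (tensor_vec (tensor_vec \<phi> \<psi>) \<phi>)
                 / complex_of_real (cmod (braket X (tensor_vec (tensor_vec \<phi> \<psi>) \<phi>)));
            e2 = braket X (tensor_vec (tensor_vec \<psi> \<phi>) \<psi>)
                 / complex_of_real (cmod (braket X (tensor_vec (tensor_vec \<psi> \<phi>) \<psi>)));
            w = (\<alpha> * e1) \<cdot>\<^sub>v \<psi> + (\<beta> * e2) \<cdot>\<^sub>v \<phi>;
            \<phi>' = complex_of_real (1 / vnorm w) \<cdot>\<^sub>v w;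
            p = c1 * c2 / (c1 + c2) * (vnorm w)\<^sup>2
        in p \<noteq> 0 \<longrightarrow>
           F (tensor_mat (tensor_mat (tensor_mat (tensor_mat (proj \<mu>) (proj \<psi>)) (proj \<psi>))
                (proj \<phi>)) (proj \<phi>))
           = complex_of_real p \<cdot>\<^sub>m proj \<phi>'))"
proof -
  define K where "K = superposition_kraus d X c1 c2"
  have K: "K \<in> carrier_mat d (2 * d\<^sup>2 * d\<^sup>2)" by (simp add: K_def superposition_kraus_def contraction_op_carrier)
  have F: "prob_qtrans (2 * d\<^sup>2 * d\<^sup>2) d (\<lambda>A. K * A * mat_adj K)"
    using prob_qtrans_coisometry[OF K] superposition_kraus_coisometry[OF assms(2-4)] by (simp add: K_def)
  show ?thesis
  proof (rule exI[of _ "\<lambda>A. K * A * mat_adj K"], intro conjI allI impI, goal_cases)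
    case 1
    show ?case by (fact F)
  next
    case (2 \<psi> \<phi> \<alpha> \<beta>)
    have X: "dim_vec X = d ^ 3" and \<psi>: "dim_vec \<psi> = d" and \<phi>: "dim_vec \<phi> = d"
      using assms(2) 2(1,2) by (simp_all add: unit_vec_c_def)
    show ?case
      using proj_mult_mat_vec_normalize[OF K _ superposition_kraus_output[OF X \<psi> \<phi> assms(3,4) 2(3,4),
            of \<alpha> \<beta>, folded K_def]] \<psi> \<phi> assms(3,4)
      by (simp add: Let_def proj_tensor_vec power2_eq_square)
  qed
qed

end
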